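(* Let $x_1,\dots,x_N\in[0,1]$ with $\mu^\star:=\frac1N\sum_{i=1}^N x_i$, and let $X_1,\dots,X_N$ be a sequential random sample without replacement from $\{x_1,\dots,x_N\}$ (at each step a ballot is drawn uniformly at random from those remaining). For $\mu\in[0,1]$ and $i\in\{1,\dots,N\}$ let \[ \mathcal C_i(\mu) := \frac{N\mu - \sum_{j=1}^{i-1}X_j}{N-i+1}. \] Let $D\ge 2$ be an integer and let $(\theta_1^+,\dots,\theta_D^+)$ and $(\theta_1^-,\dots,\theta_D^-)$ be nonnegative vectors each summing to one. Define \[ M_t^{D+}(\mu) := \sum_{d=1}^D\theta_d^+\prod_{i=1}^t\Big(1+\frac{d}{(D+1)\mathcal C_i(\mu)}(X_i-\mathcal C_i(\mu))\Big), \] \[ M_t^{D-}(\mu) := \sum_{d=1}^D\theta_d^-\prod_{i=1}^t\Big(1-\frac{d}{(D+1)(1-\mathcal C_i(\mu))}(X_i-\mathcal C_i(\mu))\Big), \] and, for $\beta\in[0,1]$, $M_t^{D\pm}(\mu) := \beta M_t^{D+}(\mu)+(1-\beta)M_t^{D-}(\mu)$, with $M_0^{D\pm}(\mu):=1$. Then $(M_t^{D\pm}(\mu^\star))_{t=0}^N$ is a nonnegative martingale starting at one (with respect to the filtration generated by $X_1,\dots,X_t$). Consequently, for $\alpha\in(0,1)$, the sets \[ C_t^{\pm} := \{\mu\in[0,1] : M_t^{D\pm}(\mu)<1/\alpha\},\quad t=1,\dots,N, \] form a $(1-\alpha)$ confidence sequence for $\mu^\star$, i.e. $\mathbb P(\exists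 t\in\{1,\dots,N\} : \mu^\star\notin C_t^\pm)\le\alpha$.
   Context: $\mathcal C_i(\mu)$ is the conditional mean of $X_i$ given $X_1,\dots,X_{i-1}$ if the population mean were $\mu$. *)

theory Defs
  imports "HOL-Probability.Probability" "HOL-Combinatorics.Permutations"
begin

text \<open>Sampling without replacement: a uniformly random permutation \<sigma> of {1..N};
  the i-th draw is X_i = x (\<sigma> i).  The observed sequence is given as X :: nat \<Rightarrow> real.\<close>

definition sample_space :: "nat \<Rightarrow> (nat \<Rightarrow> nat) set" where
  "sample_space N = {\<sigma>. \<sigma> permutes {1..N}}"

definition Ccond :: "nat \<Rightarrow> (nat \<Rightarrow> real) \<Rightarrow> real \<Rightarrow> nat \<Rightarrow> real" where
  "Ccond N X \<mu> i = (real N * \<mu> - (\<Sum>j=1..<i. X j)) / (real N - real i + 1)"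

definition Mplus :: "nat \<Rightarrow> nat \<Rightarrow> (nat \<Rightarrow> real) \<Rightarrow> (nat \<Rightarrow> real) \<Rightarrow> real \<Rightarrow> nat \<Rightarrow> real" where
  "Mplus N D \<theta> X \<mu> t = (\<Sum>d=1..D. \<theta> d * (\<Prod>i=1..t.
      1 + real d / ((real D + 1) * Ccond N X \<mu> i) * (X i - Ccond N X \<mu> i)))"

definition Mminus :: "nat \<Rightarrow> nat \<Rightarrow> (nat \<Rightarrow> real) \<Rightarrow> (nat \<Rightarrow> real) \<Rightarrow> real \<Rightarrow> nat \<Rightarrow> real" where
  "Mminus N D \<theta> X \<mu> t = (\<Sum>d=1..D. \<theta> d * (\<Prod>i=1..t.
      1 - real d / ((real D + 1) * (1 - Ccond N X \<mu> i)) * (X i - Ccond N X \<mu> i)))"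

definition Mpm :: "nat \<Rightarrow> nat \<Rightarrow> real \<Rightarrow> (nat \<Rightarrow> real) \<Rightarrow> (nat \<Rightarrow> real) \<Rightarrow> (nat \<Rightarrow> real) \<Rightarrow> real \<Rightarrow> nat \<Rightarrow> real" where
  "Mpm N D \<beta> \<theta>p \<theta>m X \<mu> t =
     (if t = 0 then 1 else \<beta> * Mplus N D \<theta>p X \<mu> t + (1 - \<beta>) * Mminus N D \<theta>m X \<mu> t)"

text \<open>Martingale w.r.t. the natural filtration of X_1..X_t on a finite sample space with the
  uniform distribution: conditional expectation of M_{t+1} given X_1..X_t is the average over the
  atom of outcomes sharing the same first t observations.\<close>
definition uniform_martingale ::
  "'w set \<Rightarrow> nat \<Rightarrow> (nat \<Rightarrow> 'w \<Rightarrow> real) \<Rightarrow> (nat \<Rightarrow> 'w \<Rightarrow> real) \<Rightarrow> bool" where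
  "uniform_martingale \<Omega> N X M \<longleftrightarrow>
     (\<forall>t<N. \<forall>\<omega>\<in>\<Omega>.
        (\<Sum>\<omega>'\<in>{\<omega>'\<in>\<Omega>. \<forall>i\<in>{1..t}. X i \<omega>' = X i \<omega>}. M (Suc t) \<omega>')
          / real (card {\<omega>'\<in>\<Omega>. \<forall>i\<in>{1..t}. X i \<omega>' = X i \<omega>}) = M t \<omega>)"

end

theory Submission
  imports Defs
begin

text \<open>Given the first \<open>t\<close> draws, the next draw is uniform among the ballots not yet drawn, so its
  conditional mean is their average, which is exactly \<open>C\<^sub>t\<^sub>+\<^sub>1(\<mu>\<^sup>\<star>)\<close>. Hence a factor
  \<open>1 + \<lambda> (X\<^sub>t\<^sub>+\<^sub>1 - C\<^sub>t\<^sub>+\<^sub>1)\<close> with a predictable bet \<open>\<lambda>\<close> has conditional mean one, every product of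
  such factors is a martingale, and so is every linear combination of such products. For
  \<open>\<lambda> = d/((D+1)C)\<close> and \<open>\<lambda> = -d/((D+1)(1-C))\<close> with \<open>d \<le> D\<close> the factors are nonnegative because
  \<open>X\<close> and \<open>C\<close> lie in \<open>[0,1]\<close>. The confidence statement is Ville's inequality, obtained by stopping
  the martingale when it first reaches \<open>1/\<alpha>\<close>: the stopped process still has mean one and is at
  least \<open>1/\<alpha>\<close> at time \<open>N\<close> on the whole bad event.\<close>

definition history_class :: "'w set \<Rightarrow> (nat \<Rightarrow> 'w \<Rightarrow> 'a) \<Rightarrow> nat \<Rightarrow> 'w \<Rightarrow> 'w set" where
  "history_class \<Omega> X t \<omega> = {\<omega>'\<in>\<Omega>. \<forall>i\<in>{1..t}. X i \<omega>' = X i \<omega>}"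

definition cond_avg :: "'w set \<Rightarrow> (nat \<Rightarrow> 'w \<Rightarrow> 'a) \<Rightarrow> nat \<Rightarrow> ('w \<Rightarrow> real) \<Rightarrow> 'w \<Rightarrow> real" where
  "cond_avg \<Omega> X t f \<omega> =
     (\<Sum>\<omega>'\<in>history_class \<Omega> X t \<omega>. f \<omega>') / real (card (history_class \<Omega> X t \<omega>))"

definition predictable :: "'w set \<Rightarrow> (nat \<Rightarrow> 'w \<Rightarrow> 'a) \<Rightarrow> (nat \<Rightarrow> 'w \<Rightarrow> 'b) \<Rightarrow> bool" where
  "predictable \<Omega> X f \<longleftrightarrow> (\<forall>t. \<forall>\<omega>\<in>\<Omega>. \<forall>\<omega>'\<in>history_class \<Omega> X t \<omega>. f (Suc t) \<omega>' = f (Suc t) \<omega>)"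

lemma uniform_martingale_iff_cond_avg:
  "uniform_martingale \<Omega> N X M \<longleftrightarrow> (\<forall>t<N. \<forall>\<omega>\<in>\<Omega>. cond_avg \<Omega> X t (M (Suc t)) \<omega> = M t \<omega>)"
  by (simp add: uniform_martingale_def cond_avg_def history_class_def)

lemma history_class_self: "\<omega> \<in> \<Omega> \<Longrightarrow> \<omega> \<in> history_class \<Omega> X t \<omega>"
  by (simp add: history_class_def)

lemma history_class_subset: "history_class \<Omega> X t \<omega> \<subseteq> \<Omega>"
  by (auto simp: history_class_def)

lemma history_class_antimono: "s \<le> t \<Longrightarrow> history_class \<Omega> X t \<omega> \<subseteq> history_class \<Omega> X s \<omega>"
  by (auto simp: history_class_def)

lemma history_class_sym:
  "\<omega> \<in> \<Omega> \<Longrightarrow> \<omega>' \<in> \<Omega> \<Longrightarrow> \<omega>' \<in> history_class \<Omega> X t \<omega> \<longleftrightarrow> \<omega> \<in> history_class \<Omega> X t \<omega>'"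
  by (auto simp: history_class_def)

lemma history_class_eq:
  "\<omega>' \<in> history_class \<Omega> X t \<omega> \<Longrightarrow> history_class \<Omega> X t \<omega>' = history_class \<Omega> X t \<omega>"
  by (auto simp: history_class_def)

lemma card_history_class_pos: "finite \<Omega> \<Longrightarrow> \<omega> \<in> \<Omega> \<Longrightarrow> 0 < card (history_class \<Omega> X t \<omega>)"
  using history_class_self history_class_subset
  by (metis card_gt_0_iff empty_iff finite_subset)

lemma predictable_on_history_class:
  assumes "predictable \<Omega> X f" "\<omega> \<in> \<Omega>" "\<omega>' \<in> history_class \<Omega> X t \<omega>" "0 < i" "i \<le> Suc t"
  shows "f i \<omega>' = f i \<omega>"
proof -
  obtain s where i: "i = Suc s" using assms(4) by (cases i) auto
  then have "s \<le> t" using assms(5) by simp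
  then have "\<omega>' \<in> history_class \<Omega> X s \<omega>"
    using assms(3) by (rule subsetD[OF history_class_antimono])
  then show ?thesis
    using assms(1,2) i unfolding predictable_def by blast
qed

lemma cond_avg_cong:
  "(\<And>\<omega>'. \<omega>' \<in> history_class \<Omega> X t \<omega> \<Longrightarrow> f \<omega>' = g \<omega>') \<Longrightarrow> cond_avg \<Omega> X t f \<omega> = cond_avg \<Omega> X t g \<omega>"
  by (simp add: cond_avg_def)

lemma cond_avg_affine:
  assumes "finite \<Omega>" "\<omega> \<in> \<Omega>"
  shows "cond_avg \<Omega> X t (\<lambda>\<omega>'. a + b * f \<omega>') \<omega> = a + b * cond_avg \<Omega> X t f \<omega>"
  using card_history_class_pos[OF assms, of X t]
  by (simp add: cond_avg_def sum.distrib sum_distrib_left[symmetric] field_simps)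

lemma cond_avg_const: "finite \<Omega> \<Longrightarrow> \<omega> \<in> \<Omega> \<Longrightarrow> cond_avg \<Omega> X t (\<lambda>_. a) \<omega> = a"
  using card_history_class_pos[of \<Omega> \<omega> X t] by (simp add: cond_avg_def)

lemma sum_cond_avg:
  assumes "finite \<Omega>"
  shows "(\<Sum>\<omega>\<in>\<Omega>. cond_avg \<Omega> X t f \<omega>) = (\<Sum>\<omega>\<in>\<Omega>. f \<omega>)"
proof -
  let ?B = "history_class \<Omega> X t"
  have "(\<Sum>\<omega>\<in>\<Omega>. cond_avg \<Omega> X t f \<omega>)
      = (\<Sum>\<omega>\<in>\<Omega>. \<Sum>\<omega>'\<in>\<Omega>. if \<omega>' \<in> ?B \<omega> then f \<omega>' / card (?B \<omega>') else 0)"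
  proof (rule sum.cong[OF refl])
    fix \<omega> assume "\<omega> \<in> \<Omega>"
    have "cond_avg \<Omega> X t f \<omega> = (\<Sum>\<omega>'\<in>\<Omega> \<inter> ?B \<omega>. f \<omega>' / card (?B \<omega>'))"
      by (simp add: cond_avg_def sum_divide_distrib history_class_eq Int_absorb1 history_class_subset)
    then show "cond_avg \<Omega> X t f \<omega> = (\<Sum>\<omega>'\<in>\<Omega>. if \<omega>' \<in> ?B \<omega> then f \<omega>' / card (?B \<omega>') else 0)"
      by (simp add: sum.inter_restrict[OF assms])
  qed
  also have "\<dots> = (\<Sum>\<omega>'\<in>\<Omega>. \<Sum>\<omega>\<in>\<Omega>. if \<omega> \<in> ?B \<omega>' then f \<omega>' / card (?B \<omega>') else 0)"
    by (subst sum.swap) (intro sum.cong refl; simp add: history_class_sym)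
  also have "\<dots> = (\<Sum>\<omega>'\<in>\<Omega>. f \<omega>')"
  proof (rule sum.cong[OF refl])
    fix \<omega>' assume "\<omega>' \<in> \<Omega>"
    then show "(\<Sum>\<omega>\<in>\<Omega>. if \<omega> \<in> ?B \<omega>' then f \<omega>' / card (?B \<omega>') else 0) = f \<omega>'"
      using card_history_class_pos[OF assms, of \<omega>' X t]
      by (simp add: sum.inter_restrict[OF assms, symmetric] Int_absorb1 history_class_subset)
  qed
  finally show ?thesis .
qed

lemma cond_avg_cmult: "cond_avg \<Omega> X t (\<lambda>\<omega>'. c * f \<omega>') \<omega> = c * cond_avg \<Omega> X t f \<omega>"
  unfolding cond_avg_def by (simp add: sum_distrib_left)

lemma cond_avg_add:
  "cond_avg \<Omega> X t (\<lambda>\<omega>'. f \<omega>' + g \<omega>') \<omega> = cond_avg \<Omega> X t f \<omega> + cond_avg \<Omega> X t g \<omega>"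
  unfolding cond_avg_def by (simp add: sum.distrib add_divide_distrib)

lemma cond_avg_sum:
  "cond_avg \<Omega> X t (\<lambda>\<omega>'. \<Sum>d\<in>I. f d \<omega>') \<omega> = (\<Sum>d\<in>I. cond_avg \<Omega> X t (f d) \<omega>)"
  unfolding cond_avg_def sum_divide_distrib by (rule sum.swap)

lemma uniform_martingale_cmult:
  "uniform_martingale \<Omega> N X M \<Longrightarrow> uniform_martingale \<Omega> N X (\<lambda>t \<omega>. c * M t \<omega>)"
  by (simp add: uniform_martingale_iff_cond_avg cond_avg_cmult)

lemma uniform_martingale_add:
  "uniform_martingale \<Omega> N X M \<Longrightarrow> uniform_martingale \<Omega> N X M'
    \<Longrightarrow> uniform_martingale \<Omega> N X (\<lambda>t \<omega>. M t \<omega> + M' t \<omega>)"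
  by (simp add: uniform_martingale_iff_cond_avg cond_avg_add)

lemma uniform_martingale_sum:
  "(\<And>d. d \<in> I \<Longrightarrow> uniform_martingale \<Omega> N X (M d))
    \<Longrightarrow> uniform_martingale \<Omega> N X (\<lambda>t \<omega>. \<Sum>d\<in>I. M d t \<omega>)"
  by (simp add: uniform_martingale_iff_cond_avg cond_avg_sum)

lemma uniform_martingale_adapted:
  assumes "uniform_martingale \<Omega> N X M" "t < N" "\<omega> \<in> \<Omega>" "\<omega>' \<in> history_class \<Omega> X t \<omega>"
  shows "M t \<omega>' = M t \<omega>"
proof -
  have "\<omega>' \<in> \<Omega>" using subsetD[OF history_class_subset assms(4)] .
  have "history_class \<Omega> X t \<omega>' = history_class \<Omega> X t \<omega>"
    using assms(4) by (rule history_class_eq)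
  then have "cond_avg \<Omega> X t (M (Suc t)) \<omega>' = cond_avg \<Omega> X t (M (Suc t)) \<omega>"
    by (simp add: cond_avg_def)
  then show ?thesis
    using assms(1-3) \<open>\<omega>' \<in> \<Omega>\<close> by (simp add: uniform_martingale_iff_cond_avg)
qed

lemma uniform_martingale_sum_eq:
  assumes "finite \<Omega>" "uniform_martingale \<Omega> N X M" "t \<le> N"
  shows "(\<Sum>\<omega>\<in>\<Omega>. M t \<omega>) = (\<Sum>\<omega>\<in>\<Omega>. M 0 \<omega>)"
  using assms(3)
proof (induction t)
  case (Suc t)
  have "(\<Sum>\<omega>\<in>\<Omega>. M (Suc t) \<omega>) = (\<Sum>\<omega>\<in>\<Omega>. cond_avg \<Omega> X t (M (Suc t)) \<omega>)"
    by (rule sum_cond_avg[OF assms(1), symmetric])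
  also have "\<dots> = (\<Sum>\<omega>\<in>\<Omega>. M t \<omega>)"
    using assms(2) Suc.prems by (intro sum.cong) (auto simp: uniform_martingale_iff_cond_avg)
  finally show ?case using Suc by simp
qed simp

fun stopped_at_level :: "real \<Rightarrow> (nat \<Rightarrow> 'w \<Rightarrow> real) \<Rightarrow> nat \<Rightarrow> 'w \<Rightarrow> real" where
  "stopped_at_level c M 0 \<omega> = M 0 \<omega>"
| "stopped_at_level c M (Suc t) \<omega> =
     (if c \<le> stopped_at_level c M t \<omega> then stopped_at_level c M t \<omega> else M (Suc t) \<omega>)"

lemma stopped_at_level_below: "stopped_at_level c M t \<omega> < c \<Longrightarrow> stopped_at_level c M t \<omega> = M t \<omega>"
  by (cases t) (auto split: if_splits)

lemma stopped_at_level_reached: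
  assumes "t \<le> T" "c \<le> M t \<omega>"
  shows "c \<le> stopped_at_level c M T \<omega>"
  using assms(1)
proof (induction T rule: dec_induct)
  case base
  show ?case using assms(2) by (cases t) auto
qed auto

lemma stopped_at_level_nonneg: "(\<And>s. s \<le> t \<Longrightarrow> 0 \<le> M s \<omega>) \<Longrightarrow> 0 \<le> stopped_at_level c M t \<omega>"
  by (induction t) auto

lemma stopped_at_level_adapted:
  assumes mart: "uniform_martingale \<Omega> N X M"
  shows "t < N \<Longrightarrow> \<omega> \<in> \<Omega> \<Longrightarrow> \<omega>' \<in> history_class \<Omega> X t \<omega>
    \<Longrightarrow> stopped_at_level c M t \<omega>' = stopped_at_level c M t \<omega>"
proof (induction t)
  case 0
  then show ?case using uniform_martingale_adapted[OF mart] by simp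
next
  case (Suc t)
  have "\<omega>' \<in> history_class \<Omega> X t \<omega>"
    using Suc.prems(3) history_class_antimono[of t "Suc t" \<Omega> X \<omega>] by auto
  then have "stopped_at_level c M t \<omega>' = stopped_at_level c M t \<omega>"
    using Suc by simp
  moreover have "M (Suc t) \<omega>' = M (Suc t) \<omega>"
    using uniform_martingale_adapted[OF mart] Suc.prems by blast
  ultimately show ?case by simp
qed

lemma uniform_martingale_stopped_at_level:
  assumes fin: "finite \<Omega>" and mart: "uniform_martingale \<Omega> N X M"
  shows "uniform_martingale \<Omega> N X (stopped_at_level c M)"
  unfolding uniform_martingale_iff_cond_avg
proof (intro allI impI ballI)
  let ?S = "stopped_at_level c M"
  fix t \<omega> assume t: "t < N" and \<omega>: "\<omega> \<in> \<Omega>"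
  note adapted = stopped_at_level_adapted[OF mart t \<omega>]
  show "cond_avg \<Omega> X t (?S (Suc t)) \<omega> = ?S t \<omega>"
  proof (cases "c \<le> ?S t \<omega>")
    case True
    then have "cond_avg \<Omega> X t (?S (Suc t)) \<omega> = cond_avg \<Omega> X t (\<lambda>_. ?S t \<omega>) \<omega>"
      using adapted by (intro cond_avg_cong) simp
    also have "\<dots> = ?S t \<omega>" by (rule cond_avg_const[OF fin \<omega>])
    finally show ?thesis .
  next
    case False
    then have "cond_avg \<Omega> X t (?S (Suc t)) \<omega> = cond_avg \<Omega> X t (M (Suc t)) \<omega>"
      using adapted by (intro cond_avg_cong) simp
    also have "\<dots> = M t \<omega>" using mart t \<omega> by (simp add: uniform_martingale_iff_cond_avg)
    also have "\<dots> = ?S t \<omega>"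
      using False by (intro stopped_at_level_below[symmetric]) simp
    finally show ?thesis .
  qed
qed

theorem ville_inequality_uniform:
  assumes fin: "finite \<Omega>" and ne: "\<Omega> \<noteq> {}" and mart: "uniform_martingale \<Omega> N X M"
    and nonneg: "\<forall>\<omega>\<in>\<Omega>. \<forall>t\<le>N. 0 \<le> M t \<omega>" and start: "\<forall>\<omega>\<in>\<Omega>. M 0 \<omega> = 1" and c: "0 < c"
  shows "measure_pmf.prob (pmf_of_set \<Omega>) {\<omega>. \<exists>t\<in>{1..N}. c \<le> M t \<omega>} \<le> 1 / c"
proof -
  let ?S = "stopped_at_level c M"
  define E where "E = {\<omega>\<in>\<Omega>. \<exists>t\<in>{1..N}. c \<le> M t \<omega>}"
  have "c * card E = (\<Sum>\<omega>\<in>E. c)" by simp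
  also have "\<dots> \<le> (\<Sum>\<omega>\<in>E. ?S N \<omega>)"
  proof (rule sum_mono)
    fix \<omega> assume "\<omega> \<in> E"
    then obtain t where "t \<le> N" "c \<le> M t \<omega>" by (auto simp: E_def)
    then show "c \<le> ?S N \<omega>" by (rule stopped_at_level_reached)
  qed
  also have "\<dots> \<le> (\<Sum>\<omega>\<in>\<Omega>. ?S N \<omega>)"
    using fin nonneg by (intro sum_mono2 stopped_at_level_nonneg) (auto simp: E_def)
  also have "\<dots> = (\<Sum>\<omega>\<in>\<Omega>. ?S 0 \<omega>)"
    by (rule uniform_martingale_sum_eq[OF fin uniform_martingale_stopped_at_level[OF fin mart]]) simp
  also have "\<dots> = card \<Omega>" using start by simp
  finally have bound: "c * card E \<le> card \<Omega>" .
  have "\<Omega> \<inter> {\<omega>. \<exists>t\<in>{1..N}. c \<le> M t \<omega>} = E" by (auto simp: E_def)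
  then have "measure_pmf.prob (pmf_of_set \<Omega>) {\<omega>. \<exists>t\<in>{1..N}. c \<le> M t \<omega>} = card E / card \<Omega>"
    using fin ne by (simp add: measure_pmf_of_set)
  also have "\<dots> \<le> 1 / c"
    using bound c fin ne by (simp add: card_gt_0_iff pos_divide_le_eq pos_le_divide_eq mult.commute)
  finally show ?thesis .
qed

lemma sample_space_finite: "finite (sample_space N)"
  unfolding sample_space_def by (rule finite_permutations) simp

lemma sample_space_nonempty: "sample_space N \<noteq> {}"
  unfolding sample_space_def using permutes_id by blast

lemma sample_draw_in_range: "\<sigma> \<in> sample_space N \<Longrightarrow> i \<in> {1..N} \<Longrightarrow> \<sigma> i \<in> {1..N}"
  unfolding sample_space_def by (metis mem_Collect_eq permutes_in_image)

lemma sum_remaining_draws: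
  assumes "\<sigma> \<in> sample_space N" "t \<le> N"
  shows "(\<Sum>j=Suc t..N. f (\<sigma> j)) = (\<Sum>i=1..N. f i) - (\<Sum>j=1..t. f (\<sigma> j) :: real)"
proof -
  have "(\<Sum>i=1..N. f i) = (\<Sum>j=1..N. f (\<sigma> j))"
    using assms(1) sum.reindex_bij_betw[OF permutes_imp_bij, of \<sigma> "{1..N}" f]
    by (simp add: sample_space_def)
  also have "\<dots> = (\<Sum>j=1..t. f (\<sigma> j)) + (\<Sum>j=Suc t..N. f (\<sigma> j))"
    using sum.ub_add_nat[of 1 t "\<lambda>j. f (\<sigma> j)" "N - t"] assms(2) by simp
  finally show ?thesis by simp
qed

lemma Ccond_sample_space:
  fixes x :: "nat \<Rightarrow> real"
  assumes "\<sigma> \<in> sample_space N" "t < N"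
  shows "Ccond N (\<lambda>j. x (\<sigma> j)) ((\<Sum>i=1..N. x i) / real N) (Suc t)
       = (\<Sum>j=Suc t..N. x (\<sigma> j)) / real (N - t)"
  using assms sum_remaining_draws[OF assms(1), of t x]
  by (simp add: Ccond_def atLeastLessThanSuc_atLeastAtMost of_nat_diff)

lemma Ccond_sample_space_bounds:
  fixes x :: "nat \<Rightarrow> real"
  assumes x01: "\<forall>i\<in>{1..N}. 0 \<le> x i \<and> x i \<le> 1" and \<sigma>: "\<sigma> \<in> sample_space N" and i: "i \<in> {1..N}"
  shows "Ccond N (\<lambda>j. x (\<sigma> j)) ((\<Sum>i=1..N. x i) / real N) i \<in> {0..1}"
proof -
  obtain t where t: "i = Suc t" "t < N" using i by (cases i) auto
  have draws01: "0 \<le> x (\<sigma> j) \<and> x (\<sigma> j) \<le> 1" if "j \<in> {Suc t..N}" for j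
    using x01 sample_draw_in_range[OF \<sigma>, of j] that by auto
  have "0 \<le> (\<Sum>j=Suc t..N. x (\<sigma> j))" using draws01 by (intro sum_nonneg) auto
  moreover have "(\<Sum>j=Suc t..N. x (\<sigma> j)) \<le> (\<Sum>j=Suc t..N. 1)" using draws01 by (intro sum_mono) auto
  ultimately show ?thesis
    unfolding t(1) Ccond_sample_space[OF \<sigma> t(2)] using t(2) by (simp add: divide_le_eq_1)
qed

lemma sum_history_class_draw_exchange:
  fixes x :: "nat \<Rightarrow> real" and \<sigma> :: "nat \<Rightarrow> nat"
  assumes "j \<in> {Suc t..N}" "k \<in> {Suc t..N}"
  defines "A \<equiv> history_class (sample_space N) (\<lambda>i \<sigma>. x (\<sigma> i)) t \<sigma>"
  shows "(\<Sum>\<sigma>'\<in>A. x (\<sigma>' j)) = (\<Sum>\<sigma>'\<in>A. x (\<sigma>' k))"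
proof -
  let ?\<tau> = "Transposition.transpose j k"
  have \<tau>: "?\<tau> permutes {1..N}"
    using assms(1,2) by (intro permutes_swap_id) auto
  have swap_in_A: "\<sigma>' \<circ> ?\<tau> \<in> A" if "\<sigma>' \<in> A" for \<sigma>'
  proof -
    have "\<sigma>' permutes {1..N}" "\<forall>i\<in>{1..t}. x (\<sigma>' i) = x (\<sigma> i)"
      using that unfolding A_def history_class_def sample_space_def by auto
    moreover have "?\<tau> i = i" if "i \<in> {1..t}" for i
      using that assms(1,2) by (intro transpose_apply_other) auto
    ultimately show ?thesis
      using permutes_compose[OF \<tau>] by (simp add: A_def history_class_def sample_space_def)
  qed
  have "bij_betw (\<lambda>\<sigma>'. \<sigma>' \<circ> ?\<tau>) A A"
    by (rule bij_betwI[where g = "\<lambda>\<sigma>'. \<sigma>' \<circ> ?\<tau>"]) (simp_all add: swap_in_A comp_assoc)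
  from sum.reindex_bij_betw[OF this, of "\<lambda>\<sigma>'. x (\<sigma>' k)"] show ?thesis
    by simp
qed

lemma cond_avg_next_draw:
  fixes x :: "nat \<Rightarrow> real"
  assumes \<sigma>: "\<sigma> \<in> sample_space N" and t: "t < N"
  shows "cond_avg (sample_space N) (\<lambda>i \<sigma>. x (\<sigma> i)) t (\<lambda>\<sigma>'. x (\<sigma>' (Suc t))) \<sigma>
       = (\<Sum>j=Suc t..N. x (\<sigma> j)) / real (N - t)"
proof -
  define A where "A = history_class (sample_space N) (\<lambda>i \<sigma>. x (\<sigma> i)) t \<sigma>"
  have remaining: "(\<Sum>k=Suc t..N. x (\<sigma>' k)) = (\<Sum>k=Suc t..N. x (\<sigma> k))" if "\<sigma>' \<in> A" for \<sigma>'
  proof -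
    have \<sigma>': "\<sigma>' \<in> sample_space N" and past: "\<And>i. i \<in> {1..t} \<Longrightarrow> x (\<sigma>' i) = x (\<sigma> i)"
      using that by (auto simp: A_def history_class_def)
    have "(\<Sum>j=1..t. x (\<sigma>' j)) = (\<Sum>j=1..t. x (\<sigma> j))"
      using past by (rule sum.cong[OF refl])
    then show ?thesis
      using sum_remaining_draws[OF \<sigma>' less_imp_le[OF t]] sum_remaining_draws[OF \<sigma> less_imp_le[OF t]]
      by simp
  qed
  have "real (N - t) * (\<Sum>\<sigma>'\<in>A. x (\<sigma>' (Suc t))) = (\<Sum>k=Suc t..N. \<Sum>\<sigma>'\<in>A. x (\<sigma>' (Suc t)))"
    by simp
  also have "\<dots> = (\<Sum>k=Suc t..N. \<Sum>\<sigma>'\<in>A. x (\<sigma>' k))"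
  proof (rule sum.cong[OF refl])
    fix k assume "k \<in> {Suc t..N}"
    then show "(\<Sum>\<sigma>'\<in>A. x (\<sigma>' (Suc t))) = (\<Sum>\<sigma>'\<in>A. x (\<sigma>' k))"
      unfolding A_def using t by (intro sum_history_class_draw_exchange) auto
  qed
  also have "\<dots> = (\<Sum>\<sigma>'\<in>A. \<Sum>k=Suc t..N. x (\<sigma> k))"
    by (subst sum.swap) (simp add: remaining)
  also have "\<dots> = real (card A) * (\<Sum>k=Suc t..N. x (\<sigma> k))" by simp
  finally have "real (N - t) * (\<Sum>\<sigma>'\<in>A. x (\<sigma>' (Suc t))) = card A * (\<Sum>k=Suc t..N. x (\<sigma> k))" .
  moreover have "0 < card A"
    unfolding A_def by (rule card_history_class_pos[OF sample_space_finite \<sigma>])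
  ultimately show ?thesis
    using t unfolding cond_avg_def A_def[symmetric] by (simp add: field_simps)
qed

lemma Ccond_predictable: "predictable \<Omega> X (\<lambda>i \<omega>. Ccond N (\<lambda>j. X j \<omega>) \<mu> i)"
  unfolding predictable_def history_class_def Ccond_def
  by (auto simp: atLeastLessThanSuc_atLeastAtMost intro!: arg_cong2[where f = "(/)"] sum.cong)

lemma uniform_martingale_prod_bets:
  fixes X C L :: "nat \<Rightarrow> 'w \<Rightarrow> real"
  assumes fin: "finite \<Omega>" and "predictable \<Omega> X C" "predictable \<Omega> X L"
    and mean: "\<And>t \<omega>. t < N \<Longrightarrow> \<omega> \<in> \<Omega> \<Longrightarrow> cond_avg \<Omega> X t (X (Suc t)) \<omega> = C (Suc t) \<omega>"
  shows "uniform_martingale \<Omega> N X (\<lambda>t \<omega>. \<Prod>i=1..t. 1 + L i \<omega> * (X i \<omega> - C i \<omega>))"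
  unfolding uniform_martingale_iff_cond_avg
proof (intro allI impI ballI)
  fix t \<omega> assume t: "t < N" and \<omega>: "\<omega> \<in> \<Omega>"
  define P where "P = (\<Prod>i=1..t. 1 + L i \<omega> * (X i \<omega> - C i \<omega>))"
  define b where "b = P * L (Suc t) \<omega>"
  have step: "(\<Prod>i=1..Suc t. 1 + L i \<omega>' * (X i \<omega>' - C i \<omega>'))
      = (P - b * C (Suc t) \<omega>) + b * X (Suc t) \<omega>'"
    if "\<omega>' \<in> history_class \<Omega> X t \<omega>" for \<omega>'
  proof -
    have bets: "C i \<omega>' = C i \<omega> \<and> L i \<omega>' = L i \<omega>" if "i \<in> {1..Suc t}" for i
      using that predictable_on_history_class[OF assms(2) \<omega> \<open>\<omega>' \<in> _\<close>]
        predictable_on_history_class[OF assms(3) \<omega> \<open>\<omega>' \<in> _\<close>] by auto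
    have "(\<Prod>i=1..t. 1 + L i \<omega>' * (X i \<omega>' - C i \<omega>')) = P"
      unfolding P_def using that bets by (intro prod.cong refl) (auto simp: history_class_def)
    moreover have "C (Suc t) \<omega>' = C (Suc t) \<omega>" "L (Suc t) \<omega>' = L (Suc t) \<omega>"
      using bets[of "Suc t"] by auto
    ultimately show ?thesis by (simp add: b_def prod.nat_ivl_Suc' algebra_simps)
  qed
  have "cond_avg \<Omega> X t (\<lambda>\<omega>'. \<Prod>i=1..Suc t. 1 + L i \<omega>' * (X i \<omega>' - C i \<omega>')) \<omega>
      = cond_avg \<Omega> X t (\<lambda>\<omega>'. (P - b * C (Suc t) \<omega>) + b * X (Suc t) \<omega>') \<omega>"
    using step by (rule cond_avg_cong)
  also have "\<dots> = (P - b * C (Suc t) \<omega>) + b * cond_avg \<Omega> X t (X (Suc t)) \<omega>"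
    by (rule cond_avg_affine[OF fin \<omega>])
  also have "\<dots> = P"
    using mean[OF t \<omega>] by simp
  finally show "cond_avg \<Omega> X t (\<lambda>\<omega>'. \<Prod>i=1..Suc t. 1 + L i \<omega>' * (X i \<omega>' - C i \<omega>')) \<omega> = P" .
qed

lemma Mpm_eq_convex_comb:
  assumes "(\<Sum>d=1..D. \<theta>p d) = 1" "(\<Sum>d=1..D. \<theta>m d) = 1"
  shows "Mpm N D \<beta> \<theta>p \<theta>m Y \<mu> t = \<beta> * Mplus N D \<theta>p Y \<mu> t + (1 - \<beta>) * Mminus N D \<theta>m Y \<mu> t"
  using assms by (simp add: Mpm_def Mplus_def Mminus_def)

lemma Mpm_uniform_martingale:
  assumes fin: "finite \<Omega>" and \<theta>: "(\<Sum>d=1..D. \<theta>p d) = 1" "(\<Sum>d=1..D. \<theta>m d) = 1"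
    and mean: "\<And>t \<omega>. t < N \<Longrightarrow> \<omega> \<in> \<Omega> \<Longrightarrow>
      cond_avg \<Omega> X t (X (Suc t)) \<omega> = Ccond N (\<lambda>j. X j \<omega>) \<mu> (Suc t)"
  shows "uniform_martingale \<Omega> N X (\<lambda>t \<omega>. Mpm N D \<beta> \<theta>p \<theta>m (\<lambda>i. X i \<omega>) \<mu> t)"
proof -
  let ?C = "\<lambda>i \<omega>. Ccond N (\<lambda>j. X j \<omega>) \<mu> i"
  have bets: "uniform_martingale \<Omega> N X (\<lambda>t \<omega>. \<Prod>i=1..t. 1 + g (?C i \<omega>) * (X i \<omega> - ?C i \<omega>))"
    for g :: "real \<Rightarrow> real"
    using Ccond_predictable[of \<Omega> X N \<mu>]
    by (intro uniform_martingale_prod_bets[OF fin] mean) (auto simp: predictable_def)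
  have "uniform_martingale \<Omega> N X (\<lambda>t \<omega>. Mplus N D \<theta>p (\<lambda>i. X i \<omega>) \<mu> t)"
    unfolding Mplus_def
    by (intro uniform_martingale_sum uniform_martingale_cmult bets)
  moreover have minus_bets: "uniform_martingale \<Omega> N X
      (\<lambda>t \<omega>. \<Prod>i=1..t. 1 - real d / ((real D + 1) * (1 - ?C i \<omega>)) * (X i \<omega> - ?C i \<omega>))" for d
    using bets[of "\<lambda>c. - (real d / ((real D + 1) * (1 - c)))"] by simp
  have "uniform_martingale \<Omega> N X (\<lambda>t \<omega>. Mminus N D \<theta>m (\<lambda>i. X i \<omega>) \<mu> t)"
    unfolding Mminus_def
    by (intro uniform_martingale_sum uniform_martingale_cmult minus_bets)
  ultimately show ?thesis
    unfolding Mpm_eq_convex_comb[OF \<theta>]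
    by (intro uniform_martingale_add uniform_martingale_cmult)
qed

text \<open>The case \<open>c = 0\<close> is harmless: then \<open>r / (s * c) = 0\<close> and the factor is \<open>1\<close>.\<close>
lemma bet_factor_nonneg:
  fixes r s c y :: real
  assumes "0 \<le> r" "r \<le> s" "0 \<le> c" "0 \<le> y"
  shows "0 \<le> 1 + r / (s * c) * (y - c)"
proof (cases "s * c = 0")
  case False
  then have c: "0 < c" and s: "0 < s" using assms by auto
  have "- 1 \<le> - r / s" using assms s by simp
  also have "- r / s = r / (s * c) * (0 - c)" using c s by (simp add: field_simps)
  also have "\<dots> \<le> r / (s * c) * (y - c)" using assms c s by (intro mult_left_mono) auto
  finally show ?thesis by simp
qed simp

lemma Mpm_nonneg:
  assumes "\<forall>d\<in>{1..D}. 0 \<le> \<theta>p d" "\<forall>d\<in>{1..D}. 0 \<le> \<theta>m d" "0 \<le> \<beta>" "\<beta> \<le> 1"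
    and Y01: "\<And>i. i \<in> {1..t} \<Longrightarrow> Y i \<in> {0..1}"
    and C01: "\<And>i. i \<in> {1..t} \<Longrightarrow> Ccond N Y \<mu> i \<in> {0..1}"
  shows "0 \<le> Mpm N D \<beta> \<theta>p \<theta>m Y \<mu> t"
proof -
  have "0 \<le> Mplus N D \<theta>p Y \<mu> t"
    unfolding Mplus_def using assms(1) Y01 C01
    by (intro sum_nonneg mult_nonneg_nonneg prod_nonneg bet_factor_nonneg) auto
  moreover have minus_factor: "0 \<le> 1 - real d / ((real D + 1) * (1 - c)) * (y - c)"
    if "d \<le> D" "c \<in> {0..1}" "y \<in> {0..1}" for d c y
  proof -
    define a where "a = real d / ((real D + 1) * (1 - c))"
    have "0 \<le> 1 + a * ((1 - y) - (1 - c))"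
      unfolding a_def using that by (intro bet_factor_nonneg) auto
    then show ?thesis
      unfolding a_def[symmetric] by (simp add: algebra_simps)
  qed
  then have "0 \<le> Mminus N D \<theta>m Y \<mu> t"
    unfolding Mminus_def using assms(2) Y01 C01
    by (intro sum_nonneg mult_nonneg_nonneg prod_nonneg minus_factor) auto
  ultimately show ?thesis
    using assms(3,4) by (simp add: Mpm_def)
qed

theorem proposition2:
  fixes N D :: nat and x :: "nat \<Rightarrow> real" and \<theta>p \<theta>m :: "nat \<Rightarrow> real" and \<beta> \<alpha> :: real
  assumes x01: "\<forall>i\<in>{1..N}. 0 \<le> x i \<and> x i \<le> 1"
    and D2: "D \<ge> 2"
    and \<theta>p_nn: "\<forall>d\<in>{1..D}. 0 \<le> \<theta>p d" and \<theta>p_sum: "(\<Sum>d=1..D. \<theta>p d) = 1"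
    and \<theta>m_nn: "\<forall>d\<in>{1..D}. 0 \<le> \<theta>m d" and \<theta>m_sum: "(\<Sum>d=1..D. \<theta>m d) = 1"
    and \<beta>01: "0 \<le> \<beta>" "\<beta> \<le> 1"
    and \<alpha>01: "0 < \<alpha>" "\<alpha> < 1"
  defines "\<mu>star \<equiv> (\<Sum>i=1..N. x i) / real N"
  defines "X \<equiv> (\<lambda>i (\<sigma>::nat \<Rightarrow> nat). x (\<sigma> i))"
  defines "M \<equiv> (\<lambda>\<mu> t \<sigma>. Mpm N D \<beta> \<theta>p \<theta>m (\<lambda>i. X i \<sigma>) \<mu> t)"
  shows "(\<forall>\<sigma>\<in>sample_space N. \<forall>t\<le>N. 0 \<le> M \<mu>star t \<sigma>)
       \<and> (\<forall>\<sigma>\<in>sample_space N. M \<mu>star 0 \<sigma> = 1)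
       \<and> uniform_martingale (sample_space N) N X (M \<mu>star)
       \<and> measure_pmf.prob (pmf_of_set (sample_space N))
           {\<sigma>. \<exists>t\<in>{1..N}. \<mu>star \<notin> {\<mu>\<in>{0..1}. M \<mu> t \<sigma> < 1 / \<alpha>}} \<le> \<alpha>"
proof -
  have mean: "cond_avg (sample_space N) X t (X (Suc t)) \<sigma> = Ccond N (\<lambda>j. X j \<sigma>) \<mu>star (Suc t)"
    if "t < N" "\<sigma> \<in> sample_space N" for t \<sigma>
    unfolding X_def \<mu>star_def
    by (simp only: cond_avg_next_draw[OF that(2,1)] Ccond_sample_space[OF that(2,1)])
  have mart: "uniform_martingale (sample_space N) N X (M \<mu>star)"
    unfolding M_def by (rule Mpm_uniform_martingale[OF sample_space_finite \<theta>p_sum \<theta>m_sum mean])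
  have nonneg: "\<forall>\<sigma>\<in>sample_space N. \<forall>t\<le>N. 0 \<le> M \<mu>star t \<sigma>"
  proof (intro ballI allI impI)
    fix \<sigma> t assume \<sigma>: "\<sigma> \<in> sample_space N" and "t \<le> N"
    then have drawn: "i \<in> {1..N}" if "i \<in> {1..t}" for i
      using that by auto
    show "0 \<le> M \<mu>star t \<sigma>"
      unfolding M_def X_def \<mu>star_def
    proof (rule Mpm_nonneg[OF \<theta>p_nn \<theta>m_nn \<beta>01])
      fix i assume "i \<in> {1..t}"
      then show "x (\<sigma> i) \<in> {0..1}"
        using x01 sample_draw_in_range[OF \<sigma> drawn] by auto
      show "Ccond N (\<lambda>j. x (\<sigma> j)) ((\<Sum>i=1..N. x i) / real N) i \<in> {0..1}"
        using Ccond_sample_space_bounds[OF x01 \<sigma> drawn] \<open>i \<in> {1..t}\<close> .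
    qed
  qed
  have start: "\<forall>\<sigma>\<in>sample_space N. M \<mu>star 0 \<sigma> = 1"
    by (simp add: M_def Mpm_def)
  have "0 \<le> (\<Sum>i=1..N. x i)" "(\<Sum>i=1..N. x i) \<le> real N"
    using x01 sum_mono[of "{1..N}" x "\<lambda>_. 1"] by (auto intro: sum_nonneg)
  then have "\<mu>star \<in> {0..1}"
    unfolding \<mu>star_def by (cases "N = 0") (simp_all add: divide_le_eq_1)
  then have "{\<sigma>. \<exists>t\<in>{1..N}. \<mu>star \<notin> {\<mu>\<in>{0..1}. M \<mu> t \<sigma> < 1 / \<alpha>}}
           = {\<sigma>. \<exists>t\<in>{1..N}. 1 / \<alpha> \<le> M \<mu>star t \<sigma>}"
    by (auto simp: not_less)
  moreover have "measure_pmf.prob (pmf_of_set (sample_space N))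
      {\<sigma>. \<exists>t\<in>{1..N}. 1 / \<alpha> \<le> M \<mu>star t \<sigma>} \<le> 1 / (1 / \<alpha>)"
    by (rule ville_inequality_uniform[OF sample_space_finite sample_space_nonempty mart nonneg start])
      (use \<alpha>01 in simp)
  ultimately have "measure_pmf.prob (pmf_of_set (sample_space N))
      {\<sigma>. \<exists>t\<in>{1..N}. \<mu>star \<notin> {\<mu>\<in>{0..1}. M \<mu> t \<sigma> < 1 / \<alpha>}} \<le> \<alpha>"
    by simp
  with nonneg start mart show ?thesis by blast
qed

end
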